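(* Let $R$ be a commutative ring with identity, $\mathcal S$ an associative $R$-algebra with identity, $\mathcal M$ a $2$-torsion free, jointly prime bimodule over $\mathcal S$, $\delta$ a derivation on $\mathcal S$ and $f:\mathcal S\to\mathcal M$ a bimodule homomorphism over $\mathcal S$. If $D:\mathcal S\to\mathcal M$ is a Jordan $(\delta,f)$-derivation on $\mathcal M$ and $x,y\in\mathcal S$ satisfy $xy=0$, then $D((yx)z)=D(yx)z+f(yx)\delta(z)$ for all $z\in\mathcal S$.
   Context: A derivation on $\mathcal S$ is an additive map $\delta$ with $\delta(ab)=\delta(a)b+a\delta(b)$. An additive map $D:\mathcal S\to\mathcal M$ is a Jordan $(\delta,f)$-derivation if $D(x^2)=D(x)x+f(x)\delta(x)$ for all $x\in\mathcal S$. $\mathcal M$ is $2$-torsion free if $2m=0$ implies $m=0$. A proper bisubmodule $\mathcal K$ of $\mathcal M$ is jointly prime if for every left ideal $I$, right ideal $J$ of $\mathcal S$ and bisubmodule $\mathcal N$ of $\mathcal M$, $I\mathcal N J\subseteq\mathcal K$ implies $I\mathcal M J\subseteq\mathcal K$ or $\mathcal N\subseteq\mathcal K$; $\mathcal M$ is jointly prime if $0$ is a jointly prime bisubmodule. *)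

theory Defs
  imports Main
begin

definition is_algebra :: "('r::comm_ring_1 \<Rightarrow> 'a::ring_1 \<Rightarrow> 'a) \<Rightarrow> bool" where
  "is_algebra sc \<longleftrightarrow>
     (\<forall>r a b. sc r (a + b) = sc r a + sc r b) \<and>
     (\<forall>r s a. sc (r + s) a = sc r a + sc s a) \<and>
     (\<forall>r s a. sc (r * s) a = sc r (sc s a)) \<and>
     (\<forall>a. sc 1 a = a) \<and>
     (\<forall>r a b. sc r (a * b) = sc r a * b \<and> sc r (a * b) = a * sc r b)"

definition is_bimodule :: "('a::ring_1 \<Rightarrow> 'm::ab_group_add \<Rightarrow> 'm) \<Rightarrow> ('m \<Rightarrow> 'a \<Rightarrow> 'm) \<Rightarrow> bool" where
  "is_bimodule lm rm \<longleftrightarrow>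
     (\<forall>a m n. lm a (m + n) = lm a m + lm a n) \<and>
     (\<forall>a b m. lm (a + b) m = lm a m + lm b m) \<and>
     (\<forall>a b m. lm (a * b) m = lm a (lm b m)) \<and>
     (\<forall>m. lm 1 m = m) \<and>
     (\<forall>a m n. rm (m + n) a = rm m a + rm n a) \<and>
     (\<forall>a b m. rm m (a + b) = rm m a + rm m b) \<and>
     (\<forall>a b m. rm m (a * b) = rm (rm m a) b) \<and>
     (\<forall>m. rm m 1 = m) \<and>
     (\<forall>a b m. rm (lm a m) b = lm a (rm m b))"

definition two_torsion_free :: "'m::ab_group_add itself \<Rightarrow> bool" where
  "two_torsion_free _ \<longleftrightarrow> (\<forall>m::'m. m + m = 0 \<longrightarrow> m = 0)"

definition additive :: "('x::ab_group_add \<Rightarrow> 'y::ab_group_add) \<Rightarrow> bool" where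
  "additive g \<longleftrightarrow> (\<forall>a b. g (a + b) = g a + g b)"

definition is_derivation :: "('a::ring_1 \<Rightarrow> 'a) \<Rightarrow> bool" where
  "is_derivation d \<longleftrightarrow> additive d \<and> (\<forall>a b. d (a * b) = d a * b + a * d b)"

definition is_bimod_hom :: "('a::ring_1 \<Rightarrow> 'm::ab_group_add \<Rightarrow> 'm) \<Rightarrow> ('m \<Rightarrow> 'a \<Rightarrow> 'm)
    \<Rightarrow> ('a \<Rightarrow> 'm) \<Rightarrow> bool" where
  "is_bimod_hom lm rm f \<longleftrightarrow> additive f \<and>
     (\<forall>a x. f (a * x) = lm a (f x)) \<and> (\<forall>a x. f (x * a) = rm (f x) a)"

definition is_jordan_delta_f_derivation ::
  "('m::ab_group_add \<Rightarrow> 'a::ring_1 \<Rightarrow> 'm) \<Rightarrow> ('a \<Rightarrow> 'a) \<Rightarrow> ('a \<Rightarrow> 'm) \<Rightarrow> ('a \<Rightarrow> 'm) \<Rightarrow> bool" where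
  "is_jordan_delta_f_derivation rm d f D \<longleftrightarrow> additive D \<and>
     (\<forall>x. D (x * x) = rm (D x) x + rm (f x) (d x))"

definition is_add_subgroup :: "'x::ab_group_add set \<Rightarrow> bool" where
  "is_add_subgroup A \<longleftrightarrow> 0 \<in> A \<and> (\<forall>a\<in>A. \<forall>b\<in>A. a + b \<in> A \<and> - a \<in> A)"

definition left_ideal :: "'a::ring_1 set \<Rightarrow> bool" where
  "left_ideal I \<longleftrightarrow> is_add_subgroup I \<and> (\<forall>s a. a \<in> I \<longrightarrow> s * a \<in> I)"

definition right_ideal :: "'a::ring_1 set \<Rightarrow> bool" where
  "right_ideal J \<longleftrightarrow> is_add_subgroup J \<and> (\<forall>s a. a \<in> J \<longrightarrow> a * s \<in> J)"

definition bisubmodule :: "('a::ring_1 \<Rightarrow> 'm::ab_group_add \<Rightarrow> 'm) \<Rightarrow> ('m \<Rightarrow> 'a \<Rightarrow> 'm) \<Rightarrow> 'm set \<Rightarrow> bool" where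
  "bisubmodule lm rm N \<longleftrightarrow> is_add_subgroup N \<and>
     (\<forall>a n. n \<in> N \<longrightarrow> lm a n \<in> N) \<and> (\<forall>a n. n \<in> N \<longrightarrow> rm n a \<in> N)"

inductive_set triple_prod :: "('a::ring_1 \<Rightarrow> 'm::ab_group_add \<Rightarrow> 'm) \<Rightarrow> ('m \<Rightarrow> 'a \<Rightarrow> 'm)
    \<Rightarrow> 'a set \<Rightarrow> 'm set \<Rightarrow> 'a set \<Rightarrow> 'm set"
  for lm rm I N J where
    gen: "a \<in> I \<Longrightarrow> n \<in> N \<Longrightarrow> b \<in> J \<Longrightarrow> rm (lm a n) b \<in> triple_prod lm rm I N J"
  | zero: "0 \<in> triple_prod lm rm I N J"
  | add: "u \<in> triple_prod lm rm I N J \<Longrightarrow> v \<in> triple_prod lm rm I N J \<Longrightarrow> u + v \<in> triple_prod lm rm I N J"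
  | neg: "u \<in> triple_prod lm rm I N J \<Longrightarrow> - u \<in> triple_prod lm rm I N J"

definition jointly_prime_bisubmodule ::
  "('a::ring_1 \<Rightarrow> 'm::ab_group_add \<Rightarrow> 'm) \<Rightarrow> ('m \<Rightarrow> 'a \<Rightarrow> 'm) \<Rightarrow> 'm set \<Rightarrow> bool" where
  "jointly_prime_bisubmodule lm rm K \<longleftrightarrow> bisubmodule lm rm K \<and> K \<noteq> UNIV \<and>
     (\<forall>I J N. left_ideal I \<longrightarrow> right_ideal J \<longrightarrow> bisubmodule lm rm N \<longrightarrow>
        triple_prod lm rm I N J \<subseteq> K \<longrightarrow>
        triple_prod lm rm I UNIV J \<subseteq> K \<or> N \<subseteq> K)"

definition jointly_prime :: "('a::ring_1 \<Rightarrow> 'm::ab_group_add \<Rightarrow> 'm) \<Rightarrow> ('m \<Rightarrow> 'a \<Rightarrow> 'm) \<Rightarrow> bool" where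
  "jointly_prime lm rm \<longleftrightarrow> jointly_prime_bisubmodule lm rm {0}"

end

theory Submission
  imports Defs
begin

text \<open>Since \<open>f\<close> is a homomorphism,
  \<open>f a = f 1 \<cdot> a\<close>, so \<open>E a = D a - f 1 \<cdot> \<delta> a\<close> is a Jordan left centralizer:
  \<open>E (a * a) = E a \<cdot> a\<close>. Linearizing this twice and using 2-torsion freeness gives
  \<open>E (a b c + c b a) = E a \<cdot> (b c) + E c \<cdot> (b a)\<close>; for \<open>x y = 0\<close> and
  \<open>(a, b, c) = (y, x, z)\<close> the term \<open>z x y\<close> vanishes, so \<open>E (y x z) = E y \<cdot> (x z)\<close>,
  which is the claim after translating back to \<open>D\<close>.\<close>

locale right_module =
  fixes act :: "'m::ab_group_add \<Rightarrow> 'a::ring_1 \<Rightarrow> 'm"  (infixl "\<cdot>" 70)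
  assumes act_add_left: "(m + n) \<cdot> a = m \<cdot> a + n \<cdot> a"
    and act_add_right: "m \<cdot> (a + b) = m \<cdot> a + m \<cdot> b"
    and act_mult: "m \<cdot> (a * b) = (m \<cdot> a) \<cdot> b"
    and act_one: "m \<cdot> 1 = m"
begin

lemma act_zero_right [simp]: "m \<cdot> 0 = 0"
  using act_add_right [of m 0 0] by simp

lemma act_diff_left: "(m - n) \<cdot> a = m \<cdot> a - n \<cdot> a"
  using act_add_left [of "m - n" n a] by (simp add: algebra_simps)

end

lemma right_module_if_bimodule: "is_bimodule lm rm \<Longrightarrow> right_module rm"
  unfolding is_bimodule_def right_module_def by blast

locale jordan_left_centralizer =
  right_module act for act :: "'m::ab_group_add \<Rightarrow> 'a::ring_1 \<Rightarrow> 'm"  (infixl "\<cdot>" 70) +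
  fixes E :: "'a \<Rightarrow> 'm"
  assumes E_add: "E (a + b) = E a + E b"
    and E_square: "E (a * a) = E a \<cdot> a"
begin

lemma E_zero [simp]: "E 0 = 0"
  using E_add [of 0 0] by simp

lemma E_jordan_product: "E (a * b + b * a) = E a \<cdot> b + E b \<cdot> a"
proof -
  have "(a + b) * (a + b) = a * a + b * b + (a * b + b * a)"
    by (simp add: algebra_simps)
  then have "E a \<cdot> a + E b \<cdot> b + E (a * b + b * a) = E (a + b) \<cdot> (a + b)"
    by (metis E_add E_square)
  also have "\<dots> = E a \<cdot> a + E b \<cdot> b + (E a \<cdot> b + E b \<cdot> a)"
    by (simp add: E_add act_add_left act_add_right algebra_simps)
  finally show ?thesis by simp
qed

lemma E_sandwich:
  assumes "two_torsion_free TYPE('m)"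
  shows "E (a * b * a) = E a \<cdot> (b * a)"
proof -
  let ?c = "a * b + b * a"
  have ring_identity: "a * ?c + ?c * a = (a * a * b + b * (a * a)) + (a * b * a + a * b * a)"
    by (simp add: algebra_simps)
  have expand: "E (a * ?c + ?c * a)
      = E (a * a * b + b * (a * a)) + (E (a * b * a) + E (a * b * a))"
    unfolding ring_identity by (simp only: E_add)
  have outer: "E (a * a * b + b * (a * a)) = E a \<cdot> (a * b) + E b \<cdot> (a * a)"
    by (simp only: E_jordan_product E_square act_mult)
  have inner: "E ?c \<cdot> a = E a \<cdot> (b * a) + E b \<cdot> (a * a)"
    by (simp only: E_jordan_product act_add_left act_mult)
  have "E a \<cdot> (a * b) + E b \<cdot> (a * a) + (E (a * b * a) + E (a * b * a))
      = E (a * ?c + ?c * a)"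
    by (simp only: expand outer)
  also have "\<dots> = E a \<cdot> ?c + E ?c \<cdot> a"
    by (rule E_jordan_product)
  also have "\<dots> = E a \<cdot> (a * b) + E a \<cdot> (b * a) + (E a \<cdot> (b * a) + E b \<cdot> (a * a))"
    by (simp only: inner act_add_right)
  finally have "(E (a * b * a) - E a \<cdot> (b * a)) + (E (a * b * a) - E a \<cdot> (b * a)) = 0"
    by (simp add: algebra_simps)
  with assms have "E (a * b * a) - E a \<cdot> (b * a) = 0"
    unfolding two_torsion_free_def by blast
  then show ?thesis by simp
qed

lemma E_sandwich_linearized:
  assumes "two_torsion_free TYPE('m)"
  shows "E (a * b * c + c * b * a) = E a \<cdot> (b * c) + E c \<cdot> (b * a)"
proof -
  have "(a + c) * b * (a + c) = a * b * a + c * b * c + (a * b * c + c * b * a)"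
    by (simp add: algebra_simps)
  then have "E a \<cdot> (b * a) + E c \<cdot> (b * c) + E (a * b * c + c * b * a)
      = E (a + c) \<cdot> (b * (a + c))"
    using E_sandwich [OF assms] by (metis E_add)
  also have "\<dots> = E a \<cdot> (b * a) + E c \<cdot> (b * c) + (E a \<cdot> (b * c) + E c \<cdot> (b * a))"
    by (simp add: E_add act_add_left act_add_right algebra_simps)
  finally show ?thesis by simp
qed

lemma E_left_centralizer_at_annihilator_product:
  assumes "two_torsion_free TYPE('m)" and "x * y = 0"
  shows "E (y * x * z) = E (y * x) \<cdot> z"
proof -
  have E_yx: "E (y * x * w) = E y \<cdot> (x * w)" for w
    using E_sandwich_linearized [OF assms(1), of y x w] assms(2)
    by (simp add: mult.assoc)
  show ?thesis
    using E_yx [of z] E_yx [of 1] by (simp add: act_mult)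
qed

end

context right_module
begin

lemma jordan_left_centralizer_shift:
  assumes "is_derivation d"
    and "is_jordan_delta_f_derivation act d f D"
    and f_right_linear: "\<And>a b. f (a * b) = f a \<cdot> b"
  shows "jordan_left_centralizer act (\<lambda>a. D a - f 1 \<cdot> d a)"
proof
  have f_eq: "f a = f 1 \<cdot> a" for a
    using f_right_linear [of 1 a] by simp
  have d_add: "d (a + b) = d a + d b" and d_mult: "d (a * b) = d a * b + a * d b" for a b
    using assms(1) unfolding is_derivation_def additive_def by blast+
  have D_add: "D (a + b) = D a + D b"
    and D_square: "D (a * a) = D a \<cdot> a + f a \<cdot> d a" for a b
    using assms(2) unfolding is_jordan_delta_f_derivation_def additive_def by blast+
  show "D (a + b) - f 1 \<cdot> d (a + b) = (D a - f 1 \<cdot> d a) + (D b - f 1 \<cdot> d b)" for a b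
    by (simp add: D_add d_add act_add_right)
  show "D (a * a) - f 1 \<cdot> d (a * a) = (D a - f 1 \<cdot> d a) \<cdot> a" for a
    by (simp add: D_square d_mult f_eq [of a] act_add_right act_diff_left
        flip: act_mult)
qed

lemma jordan_delta_f_derivation_at_annihilator_product:
  assumes "two_torsion_free TYPE('m)"
    and "is_derivation d"
    and f_right_linear: "\<And>a b. f (a * b) = f a \<cdot> b"
    and "is_jordan_delta_f_derivation act d f D"
    and "x * y = 0"
  shows "D (y * x * z) = D (y * x) \<cdot> z + f (y * x) \<cdot> d z"
proof -
  have f_eq: "f a = f 1 \<cdot> a" for a
    using f_right_linear [of 1 a] by simp
  have d_mult: "d (a * b) = d a * b + a * d b" for a b
    using assms(2) unfolding is_derivation_def by blast
  interpret E: jordan_left_centralizer act "\<lambda>a. D a - f 1 \<cdot> d a"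
    by (rule jordan_left_centralizer_shift [OF assms(2,4) f_right_linear])
  have "D (y * x * z) - f 1 \<cdot> d (y * x * z) = (D (y * x) - f 1 \<cdot> d (y * x)) \<cdot> z"
    by (rule E.E_left_centralizer_at_annihilator_product [OF assms(1,5)])
  moreover have "f 1 \<cdot> d (y * x * z) = (f 1 \<cdot> d (y * x)) \<cdot> z + f (y * x) \<cdot> d z"
    by (simp only: d_mult [of "y * x" z] act_add_right act_mult f_eq [of "y * x"])
  ultimately show ?thesis
    by (simp add: act_diff_left algebra_simps)
qed

end

theorem lemma3p13:
  fixes sc :: "'r::comm_ring_1 \<Rightarrow> 'a::ring_1 \<Rightarrow> 'a"
    and lm :: "'a \<Rightarrow> 'm::ab_group_add \<Rightarrow> 'm"
    and rm :: "'m \<Rightarrow> 'a \<Rightarrow> 'm"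
    and d :: "'a \<Rightarrow> 'a"
    and f D :: "'a \<Rightarrow> 'm"
    and x y :: 'a
  assumes "is_algebra sc"
    and "is_bimodule lm rm"
    and "two_torsion_free TYPE('m)"
    and "jointly_prime lm rm"
    and "is_derivation d"
    and "is_bimod_hom lm rm f"
    and "is_jordan_delta_f_derivation rm d f D"
    and "x * y = 0"
  shows "\<forall>z. D ((y * x) * z) = rm (D (y * x)) z + rm (f (y * x)) (d z)"
proof -
  have "f (a * b) = rm (f a) b" for a b
    using assms(6) unfolding is_bimod_hom_def by blast
  then show ?thesis
    using right_module.jordan_delta_f_derivation_at_annihilator_product
      [OF right_module_if_bimodule [OF assms(2)] assms(3,5) _ assms(7,8)]
    by blast
qed

end
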